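(* (1) If $G:[0,1]\to[0,\infty)$ is continuous, increasing, positive on $(0,1]$ and satisfies $\liminf_{x\to0^+}x\log(1/G(x))>0$ and $\int_0^d\log\log(1/G(x))\,dx<\infty$ for some $d>0$, then the sequence $M_n=2\int_0^1G(1-r)r^{2n+1}\,dr$, $n\ge0$, is admissible. (2) Conversely, if $\{M_n\}_{n\ge0}$ is an admissible sequence, then there exists a continuous increasing function $G$ on $[0,1]$ with $G(0)=0$, satisfying $\liminf_{x\to0^+}x\log(1/G(x))>0$ and $\int_0^d\log\log(1/G(x))\,dx<\infty$ for some $d>0$, such that $P_G(2n+1)\le M_n$ for all sufficiently large $n$, where $P_G(x)=\int_0^1G(1-r)r^x\,dr$.
   Context: A decreasing sequence of positive numbers $\{M_n\}_{n\ge0}$ with $M_n\to0$ is admissible if: (1) $2\log M_n\le\log M_{n+1}+\log M_{n-1}$ for all sufficiently large $n$; (2) there is $d>0$ with $M_n\le e^{-d\sqrt n}$ for all sufficiently large $n$; (3) $\sum_{n\ge0}\frac{\log(1/M_n)}{1+n^2}<\infty$. *)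

theory Defs
  imports "HOL-Analysis.Analysis"
begin

definition admissible :: "(nat \<Rightarrow> real) \<Rightarrow> bool" where
  "admissible M \<longleftrightarrow>
     (\<forall>n. M n > 0) \<and> decseq M \<and> M \<longlonglongrightarrow> 0 \<and>
     (\<forall>\<^sub>F n in sequentially. 2 * ln (M n) \<le> ln (M (n + 1)) + ln (M (n - 1))) \<and>
     (\<exists>d>0. \<forall>\<^sub>F n in sequentially. M n \<le> exp (- d * sqrt (real n))) \<and>
     summable (\<lambda>n. ln (1 / M n) / (1 + (real n)\<^sup>2))"

definition liminf_cond :: "(real \<Rightarrow> real) \<Rightarrow> bool" where
  "liminf_cond G \<longleftrightarrow> Liminf (at_right 0) (\<lambda>x. ereal (x * ln (1 / G x))) > 0"

definition loglog_cond :: "(real \<Rightarrow> real) \<Rightarrow> bool" where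
  "loglog_cond G \<longleftrightarrow> (\<exists>d>0. (\<forall>x\<in>{0<..d}. G x < 1) \<and>
      set_integrable lborel {0<..d} (\<lambda>x. ln (ln (1 / G x))))"

definition P_G :: "(real \<Rightarrow> real) \<Rightarrow> real \<Rightarrow> real" where
  "P_G G x = integral {0..1} (\<lambda>r. G (1 - r) * r powr x)"

end

theory Submission
  imports Defs "HOL-Real_Asymp.Real_Asymp"
begin

(*
  (1) The moments I k = integral of G (1 - r) r^k over [0, 1] decrease in k and are
  log-convex by Cauchy-Schwarz.  The liminf condition gives G s < exp (- c / s) near 0,
  so by AM-GM  I k <= exp (- 2 sqrt (c k)) + G 1 exp (- delta k).  For the summability,
  I k >= t G t (1 - 2 t)^k  gives  ln (1 / I k) <= ln (1 / t) + ln (1 / G t) + 4 k t.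
  On the block 2^m <= n < 2^(m+1) take t = a / 2^kappa(m), where kappa(m) balances
  ln (1 / G t) against 2^(m - kappa(m)); read on dyadic intervals, the integrability of
  ln ln (1 / G) near 0 is exactly what makes the sum of 2^(-kappa(m)) finite.

  (2) L n = ln (1 / M n) is eventually increasing, concave and >= d sqrt n.  Put
  H s = sup_n (L n - (2 n + 1) s) and G = exp (- H).  Since r <= exp (r - 1), each
  integrand G (1 - r) r^(2n+1) is at most exp (- L n).  H is convex, hence continuous,
  and choosing n ~ d^2 / (16 s^2) gives H s >= d^2 / (16 s), which yields the liminf
  condition and continuity at 0.  Concavity of L gives H s <= L (2^j) as soon as
  L (2^j) / 2^j <= 2 s, and these ratios are summable because the sum of
  L n / (1 + n^2) is finite; this bounds ln H on dyadic intervals and proves the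
  integrability of ln ln (1 / G).
*)

section \<open>Dyadic summation\<close>

lemma summable_real_div_two_power: "summable (\<lambda>n. real n / 2 ^ n)"
proof (rule summable_comparison_test_ev[OF _ inverse_power_summable[of 2]])
  have "\<forall>\<^sub>F n in sequentially. real n / 2 ^ n \<le> 1 / real n ^ 2"
    by real_asymp
  then show "\<forall>\<^sub>F n in sequentially. norm (real n / 2 ^ n) \<le> inverse (real n ^ 2)"
    by (simp add: inverse_eq_divide)
qed simp

lemma sum_inverse_two_power_le:
  fixes A :: "nat set"
  assumes "finite A" "0 \<le> x" and "\<And>k. k \<in> A \<Longrightarrow> 1 / 2 ^ k \<le> x"
  shows "(\<Sum>k\<in>A. 1 / 2 ^ k :: real) \<le> 2 * x"
proof (cases "A = {}")
  case True
  with assms show ?thesis by simp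
next
  case False
  define k0 where "k0 = Min A"
  have k0: "k0 \<in> A" "\<And>k. k \<in> A \<Longrightarrow> k0 \<le> k"
    using False assms(1) by (auto simp: k0_def)
  have "(\<Sum>k\<in>A. 1 / 2 ^ k :: real) = (\<Sum>i\<in>(\<lambda>k. k - k0) ` A. (1/2) ^ i) / 2 ^ k0"
  proof -
    have "inj_on (\<lambda>k. k - k0) A"
      using k0(2) by (auto simp: inj_on_def) (metis le_add_diff_inverse)
    moreover have "1 / 2 ^ k = (1/2) ^ (k - k0) / (2::real) ^ k0" if "k \<in> A" for k
      using k0(2)[OF that] by (simp add: power_diff power_one_over)
    ultimately show ?thesis
      by (simp add: sum.reindex sum_divide_distrib)
  qed
  also have "\<dots> \<le> (\<Sum>i. (1/2::real) ^ i) / 2 ^ k0"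
    by (intro divide_right_mono sum_le_suminf summable_geometric) (auto simp: assms(1))
  also have "\<dots> = 2 * (1 / 2 ^ k0)"
    by (simp add: suminf_geometric)
  finally show ?thesis
    using assms(3)[OF k0(1)] by linarith
qed

lemma dyadic_first_index:
  fixes r :: "nat \<Rightarrow> real"
  assumes nonneg: "\<And>j. 0 \<le> r j" and summable: "summable r" and "0 < \<epsilon>"
  obtains \<iota> :: "nat \<Rightarrow> nat"
  where "\<And>k. r (\<iota> k) \<le> \<epsilon> / 2 ^ k" and "summable (\<lambda>k. real (\<iota> k) / 2 ^ k)"
proof
  define \<iota> where "\<iota> k = (LEAST j. r j \<le> \<epsilon> / 2 ^ k)" for k
  have "\<exists>j. r j \<le> \<epsilon> / 2 ^ k" for k
  proof -
    have "\<forall>\<^sub>F j in sequentially. r j < \<epsilon> / 2 ^ k"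
      using summable_LIMSEQ_zero[OF summable] \<open>0 < \<epsilon>\<close> by (intro order_tendstoD) auto
    then show ?thesis
      by (auto simp: eventually_sequentially intro: less_imp_le)
  qed
  then show "r (\<iota> k) \<le> \<epsilon> / 2 ^ k" for k
    unfolding \<iota>_def by (rule LeastI_ex)
  have above: "\<epsilon> / 2 ^ k < r j" if "j < \<iota> k" for j k
    using not_less_Least[OF that[unfolded \<iota>_def]] by simp
  \<comment> \<open>Count \<open>\<iota> k\<close> as the number of indices \<open>j < \<iota> k\<close> and swap the order of summation.\<close>
  show "summable (\<lambda>k. real (\<iota> k) / 2 ^ k)"
  proof (rule bounded_imp_summable)
    fix n
    define J where "J = Suc (Max (\<iota> ` {..n}))"
    have "(\<Sum>k\<le>n. real (\<iota> k) / 2 ^ k) = (\<Sum>k\<le>n. \<Sum>j\<in>{j\<in>{..<J}. j < \<iota> k}. 1 / 2 ^ k)"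
    proof (rule sum.cong)
      fix k assume "k \<in> {..n}"
      then have "\<iota> k < J"
        by (simp add: J_def le_imp_less_Suc)
      then have "{j\<in>{..<J}. j < \<iota> k} = {..<\<iota> k}"
        by auto
      then show "real (\<iota> k) / 2 ^ k = (\<Sum>j\<in>{j\<in>{..<J}. j < \<iota> k}. 1 / 2 ^ k)"
        by simp
    qed simp
    also have "\<dots> = (\<Sum>j<J. \<Sum>k\<in>{k\<in>{..n}. j < \<iota> k}. 1 / 2 ^ k)"
      by (rule sum.swap_restrict) auto
    also have "\<dots> \<le> (\<Sum>j<J. 2 * (r j / \<epsilon>))"
      using above nonneg \<open>0 < \<epsilon>\<close>
      by (intro sum_mono sum_inverse_two_power_le) (auto simp: field_simps less_imp_le)
    also have "\<dots> \<le> (\<Sum>j. 2 * (r j / \<epsilon>))"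
      using nonneg \<open>0 < \<epsilon>\<close>
      by (intro sum_le_suminf summable_mult summable_divide summable) auto
    finally show "(\<Sum>k\<le>n. real (\<iota> k) / 2 ^ k) \<le> (\<Sum>j. 2 * (r j / \<epsilon>))" .
  qed simp
qed

lemma summable_inverse_two_power_bounded_fibres:
  fixes \<kappa> :: "nat \<Rightarrow> nat" and \<psi> :: "nat \<Rightarrow> real"
  assumes fibre: "\<And>m. real m \<le> \<psi> (\<kappa> m)" and nonneg: "\<And>k. 0 \<le> \<psi> k"
    and summable: "summable (\<lambda>k. (\<psi> k + 1) / 2 ^ k)"
  shows "summable (\<lambda>m. 1 / 2 ^ \<kappa> m :: real)"
proof (rule bounded_imp_summable)
  fix n
  have card_le: "real (card {m \<in> {..n}. \<kappa> m = k}) \<le> \<psi> k + 1" for k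
  proof -
    have "{m \<in> {..n}. \<kappa> m = k} \<subseteq> {..nat \<lfloor>\<psi> k\<rfloor>}"
      using fibre by (auto simp: le_nat_floor)
    then have "card {m \<in> {..n}. \<kappa> m = k} \<le> nat \<lfloor>\<psi> k\<rfloor> + 1"
      using card_mono[of "{..nat \<lfloor>\<psi> k\<rfloor>}"] by fastforce
    then show ?thesis
      using nonneg[of k] by linarith
  qed
  have "(\<Sum>m\<le>n. 1 / 2 ^ \<kappa> m :: real) = (\<Sum>k\<in>\<kappa> ` {..n}. \<Sum>m\<in>{m \<in> {..n}. \<kappa> m = k}. 1 / 2 ^ \<kappa> m)"
    by (rule sum.image_gen) simp
  also have "\<dots> = (\<Sum>k\<in>\<kappa> ` {..n}. real (card {m \<in> {..n}. \<kappa> m = k}) / 2 ^ k)"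
    by (rule sum.cong) auto
  also have "\<dots> \<le> (\<Sum>k\<in>\<kappa> ` {..n}. (\<psi> k + 1) / 2 ^ k)"
    by (intro sum_mono divide_right_mono card_le) auto
  also have "\<dots> \<le> (\<Sum>k. (\<psi> k + 1) / 2 ^ k)"
    using nonneg by (intro sum_le_suminf summable) (auto intro: add_nonneg_nonneg)
  finally show "(\<Sum>m\<le>n. 1 / 2 ^ \<kappa> m :: real) \<le> (\<Sum>k. (\<psi> k + 1) / 2 ^ k)" .
qed simp

text \<open>\<open>\<kappa> m\<close> is the largest \<open>k \<le> m\<close> with \<open>B k \<le> 2\<^sup>m\<^sup>-\<^sup>k\<close>; by maximality
  \<open>m \<le> k + 1 + log\<^sub>2 B (k + 1)\<close> whenever \<open>\<kappa> m = k\<close>, which bounds the fibres of \<open>\<kappa>\<close>.\<close>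
lemma dyadic_balance_index:
  fixes B :: "nat \<Rightarrow> real"
  assumes ge1: "\<And>k. 1 \<le> B k" and summable: "summable (\<lambda>k. ln (B k) / 2 ^ k)"
  obtains \<kappa> :: "nat \<Rightarrow> nat"
  where "\<And>m. \<kappa> m \<le> m" and "\<forall>\<^sub>F m in sequentially. B (\<kappa> m) \<le> 2 ^ (m - \<kappa> m)"
    and "summable (\<lambda>m. 1 / 2 ^ \<kappa> m :: real)"
proof
  define P where "P m k \<longleftrightarrow> k \<le> m \<and> (k = 0 \<or> B k \<le> 2 ^ (m - k))" for m k
  define \<kappa> where "\<kappa> m = Greatest (P m)" for m
  have P\<kappa>: "P m (\<kappa> m)" for m
    unfolding \<kappa>_def by (rule GreatestI_nat[of _ 0 m]) (auto simp: P_def)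
  have le\<kappa>: "P m k \<Longrightarrow> k \<le> \<kappa> m" for m k
    unfolding \<kappa>_def by (rule Greatest_le_nat[of _ _ m]) (auto simp: P_def)
  show \<kappa>_le: "\<kappa> m \<le> m" for m
    using P\<kappa>[of m] by (simp add: P_def)
  have "\<forall>\<^sub>F m in sequentially. B 0 \<le> 2 ^ m"
    by real_asymp
  then show "\<forall>\<^sub>F m in sequentially. B (\<kappa> m) \<le> 2 ^ (m - \<kappa> m)"
    by eventually_elim (metis P\<kappa> P_def diff_zero)
  define \<psi> where "\<psi> k = real k + 1 + ln (B (k + 1)) / ln 2" for k
  have fibre: "real m \<le> \<psi> (\<kappa> m)" for m
  proof (cases "\<kappa> m = m")
    case True
    then show ?thesis using ge1[of "m + 1"] by (simp add: \<psi>_def)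
  next
    case False
    with \<kappa>_le[of m] have "\<kappa> m + 1 \<le> m" by simp
    moreover have "\<not> P m (\<kappa> m + 1)"
      using le\<kappa>[of m "\<kappa> m + 1"] by auto
    ultimately have "2 ^ (m - (\<kappa> m + 1)) < B (\<kappa> m + 1)"
      by (auto simp: P_def)
    then have "ln (2 ^ (m - (\<kappa> m + 1))) < ln (B (\<kappa> m + 1))"
      using ge1[of "\<kappa> m + 1"] by (intro ln_less_cancel_iff[THEN iffD2]) auto
    with \<open>\<kappa> m + 1 \<le> m\<close> have "real m - (\<kappa> m + 1) < ln (B (\<kappa> m + 1)) / ln 2"
      by (simp add: ln_realpow of_nat_diff pos_less_divide_eq)
    then show ?thesis
      by (simp add: \<psi>_def)
  qed
  have "summable (\<lambda>k. ln (B (Suc k)) / 2 ^ Suc k)"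
    using summable by (subst summable_Suc_iff)
  then have "summable (\<lambda>k. real k / 2 ^ k + 2 * (1/2) ^ k + 2 / ln 2 * (ln (B (Suc k)) / 2 ^ Suc k))"
    by (intro summable_add summable_real_div_two_power summable_mult summable_geometric) auto
  then have "summable (\<lambda>k. (\<psi> k + 1) / 2 ^ k)"
    by (simp add: \<psi>_def add_divide_distrib power_one_over ac_simps)
  moreover have "0 \<le> \<psi> k" for k
    using ge1[of "k + 1"] by (simp add: \<psi>_def)
  ultimately show "summable (\<lambda>m. 1 / 2 ^ \<kappa> m :: real)"
    using summable_inverse_two_power_bounded_fibres fibre by blast
qed

lemma summable_iff_dyadic_blocks:
  fixes g :: "nat \<Rightarrow> real"
  assumes nonneg: "\<And>n. 0 \<le> g n"
  shows "summable g \<longleftrightarrow> summable (\<lambda>j. \<Sum>n\<in>{2 ^ j..<2 ^ Suc j}. g n)"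
proof -
  have split: "(\<Sum>n<2 ^ J. g n) = g 0 + (\<Sum>j<J. \<Sum>n\<in>{2 ^ j..<2 ^ Suc j}. g n)" for J
  proof (induction J)
    case (Suc J)
    have "(\<Sum>n<2 ^ Suc J. g n) = (\<Sum>n<2 ^ J. g n) + (\<Sum>n\<in>{2 ^ J..<2 ^ Suc J}. g n)"
      using sum.atLeastLessThan_concat[of 0 "2 ^ J" "2 ^ Suc J" g] by (simp add: atLeast0LessThan)
    with Suc show ?case by simp
  qed simp
  have block_nonneg: "0 \<le> (\<Sum>n\<in>{2 ^ j..<2 ^ Suc j}. g n)" for j
    by (intro sum_nonneg nonneg)
  show ?thesis
  proof
    assume "summable g"
    show "summable (\<lambda>j. \<Sum>n\<in>{2 ^ j..<2 ^ Suc j}. g n)"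
    proof (rule bounded_imp_summable[OF block_nonneg])
      fix J
      have "(\<Sum>j\<le>J. \<Sum>n\<in>{2 ^ j..<2 ^ Suc j}. g n) = (\<Sum>n<2 ^ Suc J. g n) - g 0"
        using split[of "Suc J"] by (simp add: lessThan_Suc_atMost)
      also have "\<dots> \<le> suminf g - g 0"
        by (intro diff_right_mono sum_le_suminf \<open>summable g\<close> nonneg) auto
      finally show "(\<Sum>j\<le>J. \<Sum>n\<in>{2 ^ j..<2 ^ Suc j}. g n) \<le> suminf g - g 0" .
    qed
  next
    assume blocks: "summable (\<lambda>j. \<Sum>n\<in>{2 ^ j..<2 ^ Suc j}. g n)"
    show "summable g"
    proof (rule bounded_imp_summable[OF nonneg])
      fix N
      have "(\<Sum>n\<le>N. g n) \<le> (\<Sum>n<2 ^ N. g n)"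
        using less_exp[of N] by (intro sum_mono2 nonneg) (auto intro: le_less_trans)
      also have "\<dots> \<le> g 0 + (\<Sum>j. \<Sum>n\<in>{2 ^ j..<2 ^ Suc j}. g n)"
        unfolding split by (intro add_left_mono sum_le_suminf blocks block_nonneg) auto
      finally show "(\<Sum>n\<le>N. g n) \<le> g 0 + (\<Sum>j. \<Sum>n\<in>{2 ^ j..<2 ^ Suc j}. g n)" .
    qed
  qed
qed

section \<open>Monotone integrands on dyadic intervals\<close>

definition dyadic_interval :: "real \<Rightarrow> nat \<Rightarrow> real set" where
  "dyadic_interval a k = {a / 2 ^ Suc k<..a / 2 ^ k}"

lemma dyadic_interval_subset:
  assumes "0 < a"
  shows "dyadic_interval a k \<subseteq> {0<..a}"
proof -
  have "a / 2 ^ k \<le> a"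
    using assms by (simp add: divide_le_eq)
  then show ?thesis
    using assms by (auto simp: dyadic_interval_def)
qed

lemma disjoint_family_dyadic_interval: "0 < a \<Longrightarrow> disjoint_family (dyadic_interval a)"
  unfolding disjoint_family_on_def
proof (intro ballI impI)
  fix j k :: nat assume "0 < a" "j \<noteq> k"
  have endpoints: "a / 2 ^ n \<le> a / 2 ^ i" if "i \<le> n" for i n
    using \<open>0 < a\<close> that by (intro divide_left_mono power_increasing) auto
  from \<open>j \<noteq> k\<close> have "Suc j \<le> k \<or> Suc k \<le> j" by linarith
  then show "dyadic_interval a j \<inter> dyadic_interval a k = {}"
    using endpoints[of "Suc j" k] endpoints[of "Suc k" j] by (auto simp: dyadic_interval_def)
qed

lemma UN_dyadic_interval: "0 < a \<Longrightarrow> (\<Union>k. dyadic_interval a k) = {0<..a}"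
proof (intro equalityI subsetI)
  fix x assume x: "x \<in> {0<..a}"
  have "(\<lambda>k. a / 2 ^ Suc k) \<longlonglongrightarrow> 0"
    by (intro LIMSEQ_divide_realpow_zero[THEN LIMSEQ_Suc]) auto
  then have "\<forall>\<^sub>F k in sequentially. a / 2 ^ Suc k < x"
    using x by (intro order_tendstoD) auto
  then have ex: "\<exists>k. a / 2 ^ Suc k < x"
    by (auto simp: eventually_sequentially)
  define k where "k = (LEAST k. a / 2 ^ Suc k < x)"
  have "a / 2 ^ Suc k < x"
    unfolding k_def by (rule LeastI_ex[OF ex])
  moreover have "x \<le> a / 2 ^ k"
  proof (cases k)
    case (Suc j)
    then have "\<not> a / 2 ^ Suc j < x"
      using not_less_Least[of j "\<lambda>k. a / 2 ^ Suc k < x"] by (auto simp: k_def)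
    with Suc show ?thesis by simp
  qed (use x in simp)
  ultimately show "x \<in> (\<Union>k. dyadic_interval a k)"
    by (auto simp: dyadic_interval_def simp del: power_Suc)
qed (use dyadic_interval_subset in blast)

lemma nn_integral_const_dyadic_interval:
  assumes "0 < a" "0 \<le> y"
  shows "(\<integral>\<^sup>+x. ennreal y * indicator (dyadic_interval a k) x \<partial>lborel) = ennreal (y * (a / 2 ^ Suc k))"
proof -
  have "emeasure lborel (dyadic_interval a k) = ennreal (a / 2 ^ k - a / 2 ^ Suc k)"
    unfolding dyadic_interval_def using \<open>0 < a\<close> by (intro emeasure_lborel_Ioc) (simp add: field_simps)
  moreover have "dyadic_interval a k \<in> sets lborel"
    by (simp add: dyadic_interval_def)
  ultimately show ?thesis
    using assms by (simp add: nn_integral_cmult_indicator ennreal_mult[symmetric])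
qed

lemma nn_integral_Ioc_eq_suminf_dyadic:
  fixes f :: "real \<Rightarrow> real"
  assumes "0 < a" and nonneg: "\<And>x. x \<in> {0<..a} \<Longrightarrow> 0 \<le> f x"
    and meas: "set_borel_measurable lborel {0<..a} f"
  shows "(\<integral>\<^sup>+x. ennreal (norm (indicator {0<..a} x *\<^sub>R f x)) \<partial>lborel)
    = (\<Sum>k. \<integral>\<^sup>+x. ennreal (f x) * indicator (dyadic_interval a k) x \<partial>lborel)"
proof -
  have pointwise: "ennreal (norm (indicator {0<..a} x *\<^sub>R f x))
      = (\<Sum>k. ennreal (f x) * indicator (dyadic_interval a k) x)" for x
  proof -
    have "(\<Sum>k. ennreal (f x) * indicator (dyadic_interval a k) x) = ennreal (f x) * indicator {0<..a} x"
      using suminf_indicator[OF disjoint_family_dyadic_interval[OF \<open>0 < a\<close>]] UN_dyadic_interval[OF \<open>0 < a\<close>]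
      by (simp add: ennreal_suminf_cmult)
    then show ?thesis
      using nonneg by (auto simp: indicator_def)
  qed
  have measurable: "(\<lambda>x. ennreal (f x) * indicator (dyadic_interval a k) x) \<in> borel_measurable lborel" for k
  proof -
    have "(\<lambda>x. ennreal (indicator {0<..a} x *\<^sub>R f x) * indicator (dyadic_interval a k) x)
        \<in> borel_measurable lborel"
      using meas unfolding set_borel_measurable_def
      by (intro borel_measurable_times_ennreal) (auto simp: dyadic_interval_def)
    moreover have "ennreal (indicator {0<..a} x *\<^sub>R f x) * indicator (dyadic_interval a k) x
        = ennreal (f x) * indicator (dyadic_interval a k) x" for x
      using dyadic_interval_subset[OF \<open>0 < a\<close>, of k] by (auto simp: indicator_def)
    ultimately show ?thesis by simp
  qed
  show ?thesis
    unfolding pointwise by (rule nn_integral_suminf[OF measurable])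
qed

text \<open>An integral analogue of Cauchy's condensation test: on \<open>dyadic_interval a k\<close> the
  antitone \<open>f\<close> lies between \<open>f (a / 2\<^sup>k)\<close> and \<open>f (a / 2\<^sup>k\<^sup>+\<^sup>1)\<close>.\<close>
lemma set_integrable_Ioc_iff_summable_dyadic:
  fixes f :: "real \<Rightarrow> real"
  assumes "0 < a" and anti: "antimono_on {0<..a} f"
    and nonneg: "\<And>x. x \<in> {0<..a} \<Longrightarrow> 0 \<le> f x"
    and meas: "set_borel_measurable lborel {0<..a} f"
  shows "set_integrable lborel {0<..a} f \<longleftrightarrow> summable (\<lambda>k. f (a / 2 ^ k) / 2 ^ k)"
proof -
  define c where "c k = f (a / 2 ^ k)" for k
  define \<I> where "\<I> k = (\<integral>\<^sup>+x. ennreal (f x) * indicator (dyadic_interval a k) x \<partial>lborel)" for k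
  have c_nonneg: "0 \<le> c k" for k
    using \<open>0 < a\<close> by (simp add: c_def nonneg divide_le_eq)
  have \<I>_bounds: "ennreal (c k * (a / 2 ^ Suc k)) \<le> \<I> k" "\<I> k \<le> ennreal (c (Suc k) * (a / 2 ^ Suc k))" for k
  proof -
    have "c k \<le> f x \<and> f x \<le> c (Suc k)" if "x \<in> dyadic_interval a k" for x
      using that dyadic_interval_subset[OF \<open>0 < a\<close>, of k] \<open>0 < a\<close> unfolding c_def
      by (auto simp: dyadic_interval_def intro!: monotone_onD[OF anti])
    then have "(\<integral>\<^sup>+x. ennreal (c k) * indicator (dyadic_interval a k) x \<partial>lborel) \<le> \<I> k"
      "\<I> k \<le> (\<integral>\<^sup>+x. ennreal (c (Suc k)) * indicator (dyadic_interval a k) x \<partial>lborel)"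
      unfolding \<I>_def by (auto intro!: nn_integral_mono simp: indicator_def ennreal_leI)
    then show "ennreal (c k * (a / 2 ^ Suc k)) \<le> \<I> k" "\<I> k \<le> ennreal (c (Suc k) * (a / 2 ^ Suc k))"
      unfolding nn_integral_const_dyadic_interval[OF \<open>0 < a\<close> c_nonneg] .
  qed
  have "set_integrable lborel {0<..a} f \<longleftrightarrow> (\<Sum>k. \<I> k) < \<infinity>"
    using meas nn_integral_Ioc_eq_suminf_dyadic[OF \<open>0 < a\<close> nonneg meas]
    unfolding set_integrable_def set_borel_measurable_def integrable_iff_bounded \<I>_def by auto
  also have "\<dots> \<longleftrightarrow> summable (\<lambda>k. c k / 2 ^ k)"
  proof
    assume "(\<Sum>k. \<I> k) < \<infinity>"
    moreover have "(\<Sum>k. ennreal (c k * (a / 2 ^ Suc k))) \<le> (\<Sum>k. \<I> k)"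
      by (intro suminf_le \<I>_bounds) auto
    ultimately have "summable (\<lambda>k. c k * (a / 2 ^ Suc k))"
      using c_nonneg \<open>0 < a\<close> by (intro summable_suminf_not_top) auto
    then have "summable (\<lambda>k. 2 / a * (c k * (a / 2 ^ Suc k)))"
      by (rule summable_mult)
    then show "summable (\<lambda>k. c k / 2 ^ k)"
      using \<open>0 < a\<close> by simp
  next
    assume "summable (\<lambda>k. c k / 2 ^ k)"
    then have "summable (\<lambda>k. a * (c (Suc k) / 2 ^ Suc k))"
      by (intro summable_mult) (subst summable_Suc_iff)
    then have summable: "summable (\<lambda>k. c (Suc k) * (a / 2 ^ Suc k))"
      by (simp add: field_simps)
    have "(\<Sum>k. \<I> k) \<le> (\<Sum>k. ennreal (c (Suc k) * (a / 2 ^ Suc k)))"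
      by (intro suminf_le \<I>_bounds) auto
    also have "\<dots> = ennreal (\<Sum>k. c (Suc k) * (a / 2 ^ Suc k))"
      using c_nonneg \<open>0 < a\<close> summable by (intro suminf_ennreal2) auto
    finally show "(\<Sum>k. \<I> k) < \<infinity>"
      by (simp add: le_less_trans)
  qed
  finally show ?thesis
    by (simp add: c_def)
qed

section \<open>Moments of a weight\<close>

definition moment :: "(real \<Rightarrow> real) \<Rightarrow> nat \<Rightarrow> real" where
  "moment G k = integral {0..1} (\<lambda>r. G (1 - r) * r ^ k)"

lemma power_le_exp_minus:
  fixes r :: real
  assumes "0 \<le> r"
  shows "r ^ k \<le> exp (- (real k * (1 - r)))"
proof -
  have "r ^ k \<le> exp (r - 1) ^ k"
    using assms exp_ge_add_one_self[of "r - 1"] by (intro power_mono) auto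
  then show ?thesis
    by (simp add: exp_of_nat_mult[symmetric] algebra_simps)
qed

locale weight =
  fixes G :: "real \<Rightarrow> real"
  assumes continuous: "continuous_on {0..1} G"
    and mono: "mono_on {0..1} G"
    and nonneg: "\<And>x. x \<in> {0..1} \<Longrightarrow> 0 \<le> G x"
    and pos: "\<And>x. x \<in> {0<..1} \<Longrightarrow> 0 < G x"
begin

lemma integrable_moment:
  assumes "0 \<le> a" "b \<le> 1"
  shows "(\<lambda>r. G (1 - r) * r ^ k) integrable_on {a..b}"
proof -
  have "continuous_on {0..1} (\<lambda>r. G (1 - r) * r ^ k)"
    by (intro continuous_intros continuous_on_compose2[OF continuous]) auto
  then show ?thesis
    using assms by (intro integrable_on_subinterval[OF integrable_continuous_real]) auto
qed

lemma moment_integrand_nonneg: "r \<in> {0..1} \<Longrightarrow> 0 \<le> G (1 - r) * r ^ k"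
  using nonneg[of "1 - r"] by simp

lemma moment_nonneg: "0 \<le> moment G k"
  unfolding moment_def by (intro integral_nonneg integrable_moment moment_integrand_nonneg) auto

lemma moment_ge:
  assumes "0 < t" "t \<le> 1/2"
  shows "t * G t * (1 - 2 * t) ^ k \<le> moment G k"
proof -
  have "t * (G t * (1 - 2 * t) ^ k) = integral {1 - 2 * t..1 - t} (\<lambda>_. G t * (1 - 2 * t) ^ k)"
    using assms by simp
  also have "\<dots> \<le> integral {1 - 2 * t..1 - t} (\<lambda>r. G (1 - r) * r ^ k)"
  proof (rule integral_le[OF integrable_const_ivl integrable_moment])
    fix r assume r: "r \<in> {1 - 2 * t..1 - t}"
    have "G t \<le> G (1 - r)"
      using r assms by (intro monotone_onD[OF mono]) auto
    moreover have "(1 - 2 * t) ^ k \<le> r ^ k"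
      using r assms by (intro power_mono) auto
    ultimately show "G t * (1 - 2 * t) ^ k \<le> G (1 - r) * r ^ k"
      using assms nonneg[of t] by (intro mult_mono) auto
  qed (use assms in auto)
  also have "\<dots> \<le> moment G k"
    unfolding moment_def using assms
    by (intro integral_subset_le integrable_moment) (auto intro!: moment_integrand_nonneg)
  finally show ?thesis by (simp add: mult.assoc)
qed

lemma moment_pos: "0 < moment G k"
proof -
  have "0 < 1/4 * G (1/4) * (1 - 2 * (1/4)) ^ k"
    using pos[of "1/4"] by simp
  also have "\<dots> \<le> moment G k"
    by (rule moment_ge) auto
  finally show ?thesis .
qed

lemma moment_antimono: "k \<le> j \<Longrightarrow> moment G j \<le> moment G k"
  unfolding moment_def
  by (intro integral_le integrable_moment mult_left_mono power_decreasing)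
    (auto intro: nonneg)

text \<open>Cauchy--Schwarz: the quadratic \<open>\<mu>\<^sup>2 I\<^sub>k - 2 \<mu> I\<^sub>k\<^sub>+\<^sub>j + I\<^sub>k\<^sub>+\<^sub>2\<^sub>j\<close> in \<open>\<mu>\<close> is the moment
  of \<open>r\<^sup>k (\<mu> - r\<^sup>j)\<^sup>2\<close>, hence nonnegative.\<close>
lemma moment_log_convex: "(moment G (k + j))\<^sup>2 \<le> moment G k * moment G (k + 2 * j)"
proof -
  define A B C where "A = moment G k" "B = moment G (k + j)" "C = moment G (k + 2 * j)"
  have quadratic: "2 * \<mu> * B \<le> \<mu>\<^sup>2 * A + C" for \<mu>
  proof -
    have "integral {0..1} (\<lambda>r. 2 * \<mu> * (G (1 - r) * r ^ (k + j)))
        \<le> integral {0..1} (\<lambda>r. \<mu>\<^sup>2 * (G (1 - r) * r ^ k) + G (1 - r) * r ^ (k + 2 * j))"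
    proof (intro integral_le integrable_add integrable_on_mult_right integrable_moment)
      fix r :: real assume r: "r \<in> {0..1}"
      have "0 \<le> G (1 - r) * (r ^ k * (\<mu> - r ^ j)\<^sup>2)"
        using r nonneg[of "1 - r"] by simp
      moreover have "r ^ (k + j) = r ^ k * r ^ j" "r ^ (k + 2 * j) = r ^ k * (r ^ j)\<^sup>2"
        by (simp_all add: power_add power_mult mult.commute[of 2 j])
      ultimately show "2 * \<mu> * (G (1 - r) * r ^ (k + j)) \<le> \<mu>\<^sup>2 * (G (1 - r) * r ^ k) + G (1 - r) * r ^ (k + 2 * j)"
        by (simp add: power2_diff algebra_simps)
    qed auto
    then show ?thesis
      by (simp add: A_B_C_def moment_def integral_add integrable_on_mult_right integrable_moment)
  qed
  have "0 < A" by (simp add: A_B_C_def moment_pos)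
  have "2 * (B / A) * B \<le> (B / A)\<^sup>2 * A + C"
    by (rule quadratic)
  then have "B\<^sup>2 / A \<le> C"
    using \<open>0 < A\<close> by (simp add: power2_eq_square field_simps)
  then show ?thesis
    using \<open>0 < A\<close> by (simp add: A_B_C_def pos_divide_le_eq mult.commute)
qed

lemma ln_inverse_moment_le:
  assumes "0 < t" "t \<le> 1/4"
  shows "ln (1 / moment G k) \<le> ln (1 / t) + ln (1 / G t) + 4 * k * t"
proof -
  have "0 < G t" using assms pos by auto
  have "- (2 * t) - 2 * (2 * t)\<^sup>2 \<le> ln (1 - 2 * t)"
    using assms by (intro ln_one_minus_pos_lower_bound) auto
  moreover have "2 * (2 * t)\<^sup>2 \<le> 2 * t"
    using assms by (simp add: power2_eq_square)
  ultimately have "- (4 * t) \<le> ln (1 - 2 * t)"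
    by linarith
  then have "- (4 * k * t) \<le> ln ((1 - 2 * t) ^ k)"
    using assms mult_left_mono[of "- (4 * t)" "ln (1 - 2 * t)" "real k"] by (simp add: ln_realpow)
  moreover have "ln (t * G t * (1 - 2 * t) ^ k) \<le> ln (moment G k)"
    using assms \<open>0 < G t\<close> by (intro ln_le_cancel_iff[THEN iffD2] moment_ge moment_pos) auto
  ultimately show ?thesis
    using assms \<open>0 < G t\<close> moment_pos[of k] by (simp add: ln_mult ln_div)
qed

lemma ln_inverse_moment_dyadic_bound:
  assumes "0 < a" "a \<le> 1/4" "k \<le> m" "n < 2 ^ Suc m"
    and balance: "ln (1 / G (a / 2 ^ k)) \<le> 2 ^ (m - k)"
  shows "ln (1 / moment G (2 * n + 1)) \<le> ln (1 / a) + m + 5 * 2 ^ m / 2 ^ k"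
proof -
  define t where "t = a / 2 ^ k"
  have "0 < t" "t \<le> a"
    using \<open>0 < a\<close> by (simp_all add: t_def divide_le_eq)
  then have t: "0 < t" "t \<le> 1/4"
    using \<open>a \<le> 1/4\<close> by linarith+
  have "ln (1 / t) = ln (1 / a) + k * ln 2"
    using \<open>0 < a\<close> by (simp add: t_def ln_div ln_realpow)
  also have "\<dots> \<le> ln (1 / a) + m"
    using \<open>k \<le> m\<close> ln_2_less_1 mult_mono[of "real k" "real m" "ln 2" 1] by simp
  finally have "ln (1 / t) \<le> ln (1 / a) + m" .
  moreover have "ln (1 / G t) \<le> 2 ^ m / 2 ^ k"
    using balance \<open>k \<le> m\<close> by (simp add: t_def power_diff)
  moreover have "4 * real (2 * n + 1) * t \<le> 4 * 2 ^ m / 2 ^ k"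
  proof -
    have "2 * n + 1 \<le> 4 * 2 ^ m"
      using \<open>n < 2 ^ Suc m\<close> by simp
    then have "real (2 * n + 1) \<le> real (4 * 2 ^ m)"
      by (simp only: of_nat_le_iff)
    then have "real (2 * n + 1) \<le> 4 * 2 ^ m"
      by simp
    then have "4 * real (2 * n + 1) * t \<le> 4 * (4 * 2 ^ m) * t"
      using t by (intro mult_right_mono) auto
    also have "\<dots> = 16 * a * (2 ^ m / 2 ^ k)"
      by (simp add: t_def)
    also have "\<dots> \<le> 4 * (2 ^ m / 2 ^ k)"
      using \<open>a \<le> 1/4\<close> by (intro mult_right_mono) auto
    finally show ?thesis by simp
  qed
  ultimately show ?thesis
    using ln_inverse_moment_le[OF t, of "2 * n + 1"] by linarith
qed

lemma ln_moment_convex: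
  assumes "1 \<le> n"
  shows "2 * ln (2 * moment G (2 * n + 1))
    \<le> ln (2 * moment G (2 * (n + 1) + 1)) + ln (2 * moment G (2 * (n - 1) + 1))"
proof -
  obtain j where "n = Suc j"
    using assms by (cases n) auto
  then have index: "2 * n + 1 = (2 * j + 1) + 2" "2 * (n + 1) + 1 = (2 * j + 1) + 4"
    "2 * (n - 1) + 1 = 2 * j + 1"
    by simp_all
  define k where "k = 2 * j + 1"
  have "(2 * moment G (k + 2))\<^sup>2 \<le> (2 * moment G k) * (2 * moment G (k + 4))"
    using moment_log_convex[of k 2] by (simp add: power2_eq_square)
  then have "ln ((2 * moment G (k + 2))\<^sup>2) \<le> ln ((2 * moment G k) * (2 * moment G (k + 4)))"
    using moment_pos[of k] moment_pos[of "k + 2"] moment_pos[of "k + 4"]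
    by (subst ln_le_cancel_iff) auto
  then show ?thesis
    using moment_pos[of k] moment_pos[of "k + 2"] moment_pos[of "k + 4"]
    unfolding index k_def[symmetric] by (simp add: ln_mult ln_realpow)
qed

lemma moment_block_sum_le:
  assumes "0 < a" "a \<le> 1/4" "k \<le> m"
    and balance: "ln (1 / G (a / 2 ^ k)) \<le> 2 ^ (m - k)"
  shows "(\<Sum>n\<in>{2 ^ m..<2 ^ Suc m}. max 0 (ln (1 / (2 * moment G (2 * n + 1)))) / (1 + (real n)\<^sup>2))
    \<le> (ln (1 / a) + m) / 2 ^ m + 5 / 2 ^ k"
proof -
  define C where "C = ln (1 / a) + m + 5 * 2 ^ m / 2 ^ k"
  have "0 \<le> ln (1 / a)"
    using assms by simp
  then have "0 \<le> C"
    by (simp add: C_def)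
  have term_le: "max 0 (ln (1 / (2 * moment G (2 * n + 1)))) / (1 + (real n)\<^sup>2) \<le> C / 4 ^ m"
    if n: "n \<in> {2 ^ m..<2 ^ Suc m}" for n
  proof -
    have "ln (1 / (2 * moment G (2 * n + 1))) \<le> ln (1 / moment G (2 * n + 1))"
      using moment_pos by (simp add: ln_div)
    also have "\<dots> \<le> C"
      unfolding C_def using n by (intro ln_inverse_moment_dyadic_bound assms) auto
    finally have "max 0 (ln (1 / (2 * moment G (2 * n + 1)))) \<le> C"
      using \<open>0 \<le> C\<close> by linarith
    moreover have "(4::real) ^ m \<le> 1 + (real n)\<^sup>2"
    proof -
      have "(2::real) ^ m \<le> real n"
        using n by (simp flip: of_nat_le_iff)
      then have "(2 ^ m)\<^sup>2 \<le> (real n)\<^sup>2"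
        by (intro power_mono) auto
      moreover have "(2 ^ m)\<^sup>2 = (4::real) ^ m"
        by (simp add: power2_eq_square power_mult_distrib[symmetric])
      ultimately show ?thesis
        by simp
    qed
    ultimately show ?thesis
      using \<open>0 \<le> C\<close> by (intro frac_le) auto
  qed
  have "(\<Sum>n\<in>{2 ^ m..<2 ^ Suc m}. max 0 (ln (1 / (2 * moment G (2 * n + 1)))) / (1 + (real n)\<^sup>2))
      \<le> (\<Sum>n\<in>{(2::nat) ^ m..<2 ^ Suc m}. C / 4 ^ m)"
    by (intro sum_mono term_le)
  also have "\<dots> = 2 ^ m * (C / (2 ^ m * 2 ^ m))"
    by (simp flip: power_mult_distrib)
  also have "\<dots> = (ln (1 / a) + m) / 2 ^ m + 5 / 2 ^ k"
    by (simp add: C_def field_simps)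
  finally show ?thesis .
qed

end

lemma exp_bound_of_liminf_cond:
  fixes G :: "real \<Rightarrow> real"
  assumes "liminf_cond G" and pos: "\<And>x. x \<in> {0<..1} \<Longrightarrow> 0 < G x"
  obtains c \<delta> where "0 < c" "0 < \<delta>" "\<delta> \<le> 1" "\<And>s. 0 < s \<Longrightarrow> s < \<delta> \<Longrightarrow> G s < exp (- c / s)"
proof -
  obtain c where c: "0 < ereal c" "ereal c < Liminf (at_right 0) (\<lambda>x. ereal (x * ln (1 / G x)))"
    using ereal_dense2 assms(1) unfolding liminf_cond_def by blast
  have "\<forall>\<^sub>F x in at_right 0. ereal c < ereal (x * ln (1 / G x))"
    by (rule less_LiminfD[OF c(2)])
  then obtain b where b: "0 < b" "\<And>s. 0 < s \<Longrightarrow> s < b \<Longrightarrow> c < s * ln (1 / G s)"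
    unfolding eventually_at_right_field by auto
  show ?thesis
  proof (rule that[of c "min b 1"])
    show "0 < c" "0 < min b 1" "min b 1 \<le> 1"
      using c b by auto
    fix s :: real assume s: "0 < s" "s < min b 1"
    then have "0 < G s" using pos by auto
    from s b(2)[of s] have "- c / s > ln (G s)"
      using \<open>0 < G s\<close> by (simp add: ln_div field_simps)
    then show "G s < exp (- c / s)"
      using \<open>0 < G s\<close> by (metis exp_less_cancel_iff exp_ln)
  qed
qed

locale vanishing_weight = weight +
  fixes c \<delta> :: real
  assumes c_pos: "0 < c" and \<delta>_pos: "0 < \<delta>" and \<delta>_le_1: "\<delta> \<le> 1"
    and vanishing: "\<And>s. 0 < s \<Longrightarrow> s < \<delta> \<Longrightarrow> G s < exp (- c / s)"
begin

lemma G_0: "G 0 = 0"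
proof -
  have "((\<lambda>s. exp (- c / s)) \<longlongrightarrow> 0) (at_right 0)"
    using c_pos by real_asymp
  moreover have "\<forall>\<^sub>F s in at_right 0. G 0 \<le> exp (- c / s)"
    unfolding eventually_at_right_field
  proof (intro exI[of _ \<delta>] conjI allI impI)
    fix s :: real assume s: "0 < s" "s < \<delta>"
    then have "G 0 \<le> G s"
      using \<delta>_le_1 by (intro monotone_onD[OF mono]) auto
    then show "G 0 \<le> exp (- c / s)"
      using vanishing[of s] s by linarith
  qed (rule \<delta>_pos)
  ultimately have "G 0 \<le> 0"
    by (rule tendsto_le[OF trivial_limit_at_right_real _ tendsto_const])
  then show ?thesis
    using nonneg[of 0] by simp
qed

lemma moment_integrand_le:
  assumes r: "r \<in> {0..1}"
  shows "G (1 - r) * r ^ k \<le> exp (- 2 * sqrt (c * k)) + G 1 * exp (- \<delta> * k)"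
proof -
  define s where "s = 1 - r"
  have rk: "r ^ k \<le> exp (- (k * s))"
    using power_le_exp_minus[of r k] r by (simp add: s_def)
  have "0 \<le> G 1" using nonneg by simp
  consider "s = 0" | "0 < s" "s < \<delta>" | "\<delta> \<le> s"
    using r by (fastforce simp: s_def)
  then have "G s * r ^ k \<le> exp (- 2 * sqrt (c * k)) + G 1 * exp (- \<delta> * k)"
  proof cases
    case 1
    then show ?thesis using \<open>0 \<le> G 1\<close> by (simp add: G_0)
  next
    case 2
    have "G s * r ^ k \<le> exp (- c / s) * exp (- (k * s))"
      using vanishing[OF 2] rk r 2 pos[of s] by (intro mult_mono) (auto simp: s_def)
    also have "\<dots> = exp (- (c / s + k * s))"
      by (simp flip: exp_add)
    also have "\<dots> \<le> exp (- 2 * sqrt (c * k))"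
    proof -
      have "sqrt (c / s * (k * s)) \<le> (c / s + k * s) / 2"
        using c_pos 2 by (intro arith_geo_mean_sqrt) auto
      then show ?thesis
        using 2 by simp
    qed
    finally show ?thesis
      using \<open>0 \<le> G 1\<close> by (smt (verit) exp_gt_zero mult_nonneg_nonneg)
  next
    case 3
    have "G s * r ^ k \<le> G 1 * exp (- (k * s))"
      using r rk nonneg by (intro mult_mono monotone_onD[OF mono]) (auto simp: s_def)
    also have "\<dots> \<le> G 1 * exp (- \<delta> * k)"
      using 3 \<open>0 \<le> G 1\<close> by (intro mult_left_mono) (auto simp: mult_right_mono mult.commute)
    finally show ?thesis
      by (smt (verit) exp_gt_zero)
  qed
  then show ?thesis by (simp add: s_def)
qed

lemma moment_le: "moment G k \<le> exp (- 2 * sqrt (c * k)) + G 1 * exp (- \<delta> * k)"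
proof -
  have "moment G k \<le> integral {0..1} (\<lambda>_::real. exp (- 2 * sqrt (c * k)) + G 1 * exp (- \<delta> * k))"
    unfolding moment_def by (intro integral_le integrable_moment moment_integrand_le) auto
  then show ?thesis by simp
qed

lemma moment_decay: "\<forall>\<^sub>F n in sequentially. 2 * moment G (2 * n + 1) \<le> exp (- sqrt c * sqrt n)"
proof -
  have "\<forall>\<^sub>F n in sequentially. 4 \<le> exp (sqrt c * sqrt n)"
    using c_pos by real_asymp
  moreover have "\<forall>\<^sub>F n in sequentially. 4 * G 1 * exp (- \<delta> * (2 * n + 1)) \<le> exp (- sqrt c * sqrt n)"
    using c_pos \<delta>_pos pos[of 1] by real_asymp
  ultimately show ?thesis
  proof eventually_elim
    case (elim n)
    define X where "X = sqrt c * sqrt n"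
    have "sqrt c * sqrt n \<le> sqrt (c * real (2 * n + 1))"
      using c_pos by (simp add: real_sqrt_mult)
    then have "exp (- 2 * sqrt (c * real (2 * n + 1))) \<le> exp (- X) * exp (- X)"
      by (simp add: X_def flip: exp_add)
    also have "4 * (exp (- X) * exp (- X)) \<le> exp (- X)"
      using elim(1) by (simp add: X_def exp_minus field_simps)
    finally show ?case
      using moment_le[of "2 * n + 1"] elim(2) by (simp add: X_def)
  qed
qed

lemma moment_tendsto_0: "(\<lambda>n. 2 * moment G (2 * n + 1)) \<longlonglongrightarrow> 0"
proof (rule tendsto_sandwich[OF _ moment_decay tendsto_const])
  show "\<forall>\<^sub>F n in sequentially. 0 \<le> 2 * moment G (2 * n + 1)"
    by (simp add: moment_nonneg)
  show "(\<lambda>n. exp (- sqrt c * sqrt n)) \<longlonglongrightarrow> 0"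
    using c_pos by real_asymp
qed

end

context vanishing_weight
begin

lemma ln_inverse_G_ge_1:
  assumes "0 < s" "s < \<delta>" "s \<le> c"
  shows "1 \<le> ln (1 / G s)"
proof -
  have "0 < G s"
    using pos assms \<delta>_le_1 by auto
  then have "ln (G s) < - c / s"
    using vanishing[OF assms(1,2)] by (metis ln_exp ln_less_cancel_iff exp_gt_zero)
  moreover have "1 \<le> c / s"
    using assms by simp
  ultimately show ?thesis
    using \<open>0 < G s\<close> by (simp add: ln_div)
qed

lemma summable_ln_ln_inverse_G_dyadic:
  assumes a: "0 < a" "a < \<delta>" "a \<le> c"
    and integrable: "set_integrable lborel {0<..a} (\<lambda>x. ln (ln (1 / G x)))"
  shows "summable (\<lambda>k. ln (ln (1 / G (a / 2 ^ k))) / 2 ^ k)"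
proof -
  have ge_1: "1 \<le> ln (1 / G x)" if "x \<in> {0<..a}" for x
    using that a by (intro ln_inverse_G_ge_1) auto
  have "antimono_on {0<..a} (\<lambda>x. ln (ln (1 / G x)))"
  proof (rule monotone_onI)
    fix x y :: real assume xy: "x \<in> {0<..a}" "y \<in> {0<..a}" "x \<le> y"
    then have "0 < G x" "G x \<le> G y"
      using a \<delta>_le_1 by (auto intro!: pos monotone_onD[OF mono])
    then have "ln (1 / G y) \<le> ln (1 / G x)"
      by (simp add: ln_div)
    then show "ln (ln (1 / G y)) \<le> ln (ln (1 / G x))"
      using ge_1[OF xy(2)] by simp
  qed
  moreover have "set_borel_measurable lborel {0<..a} (\<lambda>x. ln (ln (1 / G x)))"
    using integrable unfolding set_integrable_def set_borel_measurable_def by (rule borel_measurable_integrable)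
  ultimately show ?thesis
    using integrable ge_1 set_integrable_Ioc_iff_summable_dyadic[of a "\<lambda>x. ln (ln (1 / G x))"] a(1)
    by simp
qed

lemma summable_ln_inverse_moment:
  assumes a: "0 < a" "a < \<delta>" "a \<le> c" "a \<le> 1/4"
    and integrable: "set_integrable lborel {0<..a} (\<lambda>x. ln (ln (1 / G x)))"
  shows "summable (\<lambda>n. ln (1 / (2 * moment G (2 * n + 1))) / (1 + (real n)\<^sup>2))"
proof -
  have "1 \<le> ln (1 / G (a / 2 ^ k))" for k
  proof -
    have "0 < a / 2 ^ k" "a / 2 ^ k \<le> a"
      using a(1) by (simp_all add: divide_le_eq)
    then show ?thesis
      using a by (intro ln_inverse_G_ge_1) auto
  qed
  with summable_ln_ln_inverse_G_dyadic[OF a(1-3) integrable]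
  obtain \<kappa> where \<kappa>: "\<And>m. \<kappa> m \<le> m"
    "\<forall>\<^sub>F m in sequentially. ln (1 / G (a / 2 ^ \<kappa> m)) \<le> 2 ^ (m - \<kappa> m)"
    "summable (\<lambda>m. 1 / 2 ^ \<kappa> m :: real)"
    using dyadic_balance_index[of "\<lambda>k. ln (1 / G (a / 2 ^ k))"] by metis
  define g where "g n = max 0 (ln (1 / (2 * moment G (2 * n + 1)))) / (1 + (real n)\<^sup>2)" for n
  have "summable (\<lambda>m. ln (1 / a) * (1/2) ^ m + real m / 2 ^ m + 5 * (1 / 2 ^ \<kappa> m))"
    by (intro summable_add summable_mult summable_geometric summable_real_div_two_power \<kappa>(3)) auto
  then have "summable (\<lambda>m. \<Sum>n\<in>{2 ^ m..<2 ^ Suc m}. g n)"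
  proof (rule summable_comparison_test_ev[rotated])
    show "\<forall>\<^sub>F m in sequentially. norm (\<Sum>n\<in>{2 ^ m..<2 ^ Suc m}. g n)
        \<le> ln (1 / a) * (1/2) ^ m + real m / 2 ^ m + 5 * (1 / 2 ^ \<kappa> m)"
      using \<kappa>(2)
    proof eventually_elim
      case (elim m)
      have "0 \<le> (\<Sum>n\<in>{2 ^ m..<2 ^ Suc m}. g n)"
        by (intro sum_nonneg) (simp add: g_def)
      then show ?case
        using moment_block_sum_le[OF a(1,4) \<kappa>(1) elim]
        by (simp add: g_def add_divide_distrib power_one_over)
    qed
  qed
  then have "summable g"
    by (subst summable_iff_dyadic_blocks) (auto simp: g_def)
  moreover have "\<forall>\<^sub>F n in sequentially. g n = ln (1 / (2 * moment G (2 * n + 1))) / (1 + (real n)\<^sup>2)"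
    using moment_decay
  proof eventually_elim
    case (elim n)
    have "exp (- sqrt c * sqrt n) \<le> 1"
      using c_pos by simp
    with elim have "2 * moment G (2 * n + 1) \<le> 1"
      by linarith
    then have "0 \<le> ln (1 / (2 * moment G (2 * n + 1)))"
      using moment_pos[of "2 * n + 1"] by (simp add: ln_div)
    then show ?case
      by (simp add: g_def)
  qed
  ultimately show ?thesis
    by (subst summable_cong[symmetric])
qed

end

theorem admissible_moment_sequence:
  fixes G :: "real \<Rightarrow> real"
  assumes "continuous_on {0..1} G" "mono_on {0..1} G" "\<forall>x\<in>{0..1}. 0 \<le> G x"
    "\<forall>x\<in>{0<..1}. 0 < G x" "liminf_cond G" "loglog_cond G"
  shows "admissible (\<lambda>n. 2 * integral {0..1} (\<lambda>r. G (1 - r) * r ^ (2 * n + 1)))"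
proof -
  interpret weight G
    using assms(1-4) by unfold_locales auto
  obtain c \<delta> where "0 < c" "0 < \<delta>" "\<delta> \<le> 1" "\<And>s. 0 < s \<Longrightarrow> s < \<delta> \<Longrightarrow> G s < exp (- c / s)"
    using exp_bound_of_liminf_cond[OF assms(5) pos] by blast
  then interpret vanishing_weight G c \<delta>
    by unfold_locales
  obtain d where "0 < d" and integrable: "set_integrable lborel {0<..d} (\<lambda>x. ln (ln (1 / G x)))"
    using assms(6) unfolding loglog_cond_def by blast
  define a where "a = min (\<delta> / 2) (min d (min c (1/4)))"
  have a: "0 < a" "a < \<delta>" "a \<le> c" "a \<le> 1/4"
    using \<open>0 < d\<close> c_pos \<delta>_pos by (auto simp: a_def)
  have "set_integrable lborel {0<..a} (\<lambda>x. ln (ln (1 / G x)))"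
    by (rule set_integrable_subset[OF integrable]) (auto simp: a_def)
  note summable = summable_ln_inverse_moment[OF a this]
  show ?thesis
    unfolding admissible_def moment_def[symmetric]
  proof (intro conjI allI exI[of _ "sqrt c"])
    show "0 < 2 * moment G (2 * n + 1)" for n
      by (simp add: moment_pos)
    show "decseq (\<lambda>n. 2 * moment G (2 * n + 1))"
      by (intro decseq_SucI) (simp add: moment_antimono)
    show "\<forall>\<^sub>F n in sequentially. 2 * ln (2 * moment G (2 * n + 1))
        \<le> ln (2 * moment G (2 * (n + 1) + 1)) + ln (2 * moment G (2 * (n - 1) + 1))"
      using eventually_ge_at_top[of 1] by eventually_elim (rule ln_moment_convex)
    show "0 < sqrt c"
      using c_pos by simp
  qed (use moment_tendsto_0 moment_decay summable in simp_all)
qed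

section \<open>A weight from a concave sequence\<close>

locale concave_growth =
  fixes L :: "nat \<Rightarrow> real" and d :: real
  assumes L_Suc: "\<And>n. L n \<le> L (Suc n)"
    and L_concave: "\<And>n. L (Suc (Suc n)) - L (Suc n) \<le> L (Suc n) - L n"
    and d_pos: "0 < d"
    and sqrt_le_L: "\<And>n. d * sqrt n \<le> L n"
    and summable_L: "summable (\<lambda>n. L n / (1 + (real n)\<^sup>2))"
begin

lemma L_nonneg: "0 \<le> L n"
  using sqrt_le_L[of n] d_pos by (smt (verit) mult_nonneg_nonneg real_sqrt_ge_zero of_nat_0_le_iff)

lemma L_mono: "m \<le> n \<Longrightarrow> L m \<le> L n"
  using L_Suc by (rule incseqD[OF incseq_SucI])

definition slope :: "nat \<Rightarrow> real" where
  "slope n = L (Suc n) - L n"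

lemma slope_nonneg: "0 \<le> slope n"
  using L_Suc[of n] by (simp add: slope_def)

lemma slope_antimono: "m \<le> n \<Longrightarrow> slope n \<le> slope m"
  by (induction n rule: dec_induct) (auto intro: order_trans[OF L_concave[unfolded slope_def[symmetric]]])

lemma slope_le_average: "real n * slope n \<le> L n"
proof -
  have "real n * slope n \<le> L n - L 0"
  proof (induction n)
    case (Suc n)
    have "real (Suc n) * slope (Suc n) \<le> real n * slope n + slope n"
      using slope_antimono[of n "Suc n"] mult_left_mono[of "slope (Suc n)" "slope n" "real n"]
      by (simp add: algebra_simps)
    with Suc show ?case
      by (simp add: slope_def)
  qed simp
  then show ?thesis
    using L_nonneg[of 0] by linarith
qed

lemma L_le_tangent: "m \<le> n \<Longrightarrow> L n \<le> L m + (real n - real m) * slope m"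
proof (induction n rule: dec_induct)
  case (step n)
  then show ?case
    using slope_antimono[of m n] by (simp add: slope_def algebra_simps)
qed simp

definition dyadic_ratio :: "nat \<Rightarrow> real" where
  "dyadic_ratio j = L (2 ^ j) / 2 ^ j"

lemma dyadic_ratio_nonneg: "0 \<le> dyadic_ratio j"
  by (simp add: dyadic_ratio_def L_nonneg)

text \<open>By concavity \<open>L\<close> lies below its tangent at \<open>2\<^sup>j\<close>, whose slope is at most \<open>L(2\<^sup>j)/2\<^sup>j\<close>.\<close>
lemma L_minus_linear_le:
  assumes "dyadic_ratio j \<le> \<tau>"
  shows "L n - n * \<tau> \<le> L (2 ^ j)"
proof (cases "n \<le> 2 ^ j")
  case True
  have "0 \<le> real n * \<tau>"
    using assms dyadic_ratio_nonneg[of j] by simp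
  with L_mono[OF True] show ?thesis by linarith
next
  case False
  have "L (2 ^ j) \<le> 2 ^ j * \<tau>"
    using assms by (simp add: dyadic_ratio_def divide_le_eq mult.commute)
  with slope_le_average[of "2 ^ j"] have "2 ^ j * slope (2 ^ j) \<le> 2 ^ j * \<tau>"
    by (metis of_nat_numeral of_nat_power order.trans)
  then have "slope (2 ^ j) \<le> \<tau>"
    by simp
  then have "(real n - 2 ^ j) * slope (2 ^ j) \<le> real n * \<tau>"
    using slope_nonneg by (intro mult_mono) auto
  with L_le_tangent[of "2 ^ j" n] False show ?thesis
    by simp
qed

lemma summable_dyadic_ratio: "summable dyadic_ratio"
proof -
  have ratio_le: "dyadic_ratio j \<le> 5 * (\<Sum>n\<in>{2 ^ j..<2 ^ Suc j}. L n / (1 + (real n)\<^sup>2))" for j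
  proof -
    have "L (2 ^ j) / (5 * 4 ^ j) \<le> L n / (1 + (real n)\<^sup>2)" if n: "n \<in> {2 ^ j..<2 ^ Suc j}" for n
    proof -
      have "n \<le> 2 * 2 ^ j"
        using n by simp
      then have "real n \<le> real (2 * 2 ^ j)"
        by (simp only: of_nat_le_iff)
      then have "real n \<le> 2 * 2 ^ j"
        by simp
      then have "(real n)\<^sup>2 \<le> (2 * 2 ^ j)\<^sup>2"
        by (intro power_mono) auto
      also have "\<dots> = 4 * 4 ^ j"
        by (simp add: power2_eq_square power_mult_distrib[symmetric])
      finally have "1 + (real n)\<^sup>2 \<le> 5 * 4 ^ j"
        using one_le_power[of "4::real" j] by linarith
      then show ?thesis
        using n L_mono[of "2 ^ j" n] L_nonneg[of "2 ^ j"] by (intro frac_le) (auto intro: add_pos_nonneg)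
    qed
    then have "2 ^ j * (L (2 ^ j) / (5 * 4 ^ j)) \<le> (\<Sum>n\<in>{2 ^ j..<2 ^ Suc j}. L n / (1 + (real n)\<^sup>2))"
      using sum_bounded_below[of "{(2::nat) ^ j..<2 ^ Suc j}" "L (2 ^ j) / (5 * 4 ^ j)"] by simp
    moreover have "2 ^ j * (L (2 ^ j) / (5 * 4 ^ j)) = dyadic_ratio j / 5"
      by (simp add: dyadic_ratio_def power_mult_distrib[symmetric] field_simps)
    ultimately show ?thesis by simp
  qed
  have "summable (\<lambda>j. \<Sum>n\<in>{2 ^ j..<2 ^ Suc j}. L n / (1 + (real n)\<^sup>2))"
    by (rule summable_iff_dyadic_blocks[THEN iffD1, OF _ summable_L]) (simp add: L_nonneg)
  then have "summable (\<lambda>j. 5 * (\<Sum>n\<in>{2 ^ j..<2 ^ Suc j}. L n / (1 + (real n)\<^sup>2)))"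
    by (rule summable_mult)
  then show ?thesis
  proof (rule summable_comparison_test'[where N = 0])
    show "norm (dyadic_ratio j) \<le> 5 * (\<Sum>n\<in>{2 ^ j..<2 ^ Suc j}. L n / (1 + (real n)\<^sup>2))" for j
      using ratio_le[of j] dyadic_ratio_nonneg[of j] by simp
  qed
qed

text \<open>The weight will be \<open>exp (- H s)\<close>: the supremum is taken exactly so that, with
  \<open>r\<^sup>2\<^sup>n\<^sup>+\<^sup>1 \<le> exp (- (2 n + 1) (1 - r))\<close>, every integrand of \<open>P_G\<close> is at most \<open>exp (- L n)\<close>.\<close>
definition H :: "real \<Rightarrow> real" where
  "H s = (SUP n. L n - (2 * real n + 1) * s)"

lemma H_term_le:
  assumes "0 < s" "dyadic_ratio j \<le> 2 * s"
  shows "L n - (2 * real n + 1) * s \<le> L (2 ^ j)"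
proof -
  have "L n - (2 * real n + 1) * s \<le> L n - n * (2 * s)"
    using assms by (simp add: algebra_simps)
  also have "\<dots> \<le> L (2 ^ j)"
    by (rule L_minus_linear_le[OF assms(2)])
  finally show ?thesis .
qed

lemma exists_dyadic_ratio_le: "0 < t \<Longrightarrow> \<exists>j. dyadic_ratio j \<le> t"
  using order_tendstoD(2)[OF summable_LIMSEQ_zero[OF summable_dyadic_ratio]]
  by (fastforce simp: eventually_sequentially intro: less_imp_le)

lemma bdd_above_H: "0 < s \<Longrightarrow> bdd_above (range (\<lambda>n. L n - (2 * real n + 1) * s))"
  using exists_dyadic_ratio_le[of "2 * s"] H_term_le by (fastforce intro: bdd_aboveI2)

lemma H_ge: "0 < s \<Longrightarrow> L n - (2 * real n + 1) * s \<le> H s"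
  unfolding H_def by (rule cSUP_upper[OF _ bdd_above_H]) auto

lemma H_le: "0 < s \<Longrightarrow> dyadic_ratio j \<le> 2 * s \<Longrightarrow> H s \<le> L (2 ^ j)"
  unfolding H_def by (rule cSUP_least) (auto intro: H_term_le)

lemma H_antimono: "0 < x \<Longrightarrow> x \<le> y \<Longrightarrow> H y \<le> H x"
  unfolding H_def[of y]
proof (rule cSUP_least)
  fix n assume "0 < x" "x \<le> y"
  then have "L n - (2 * real n + 1) * y \<le> L n - (2 * real n + 1) * x"
    by (intro diff_left_mono mult_left_mono) auto
  also have "\<dots> \<le> H x"
    using H_ge \<open>0 < x\<close> by blast
  finally show "L n - (2 * real n + 1) * y \<le> H x" .
qed simp

lemma convex_on_H: "convex_on {0<..} H"
proof (rule convex_onI)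
  fix t x y :: real
  assume t: "0 < t" "t < 1" and xy: "x \<in> {0<..}" "y \<in> {0<..}"
  have "H ((1 - t) * x + t * y) \<le> (1 - t) * H x + t * H y"
    unfolding H_def[of "(1 - t) * x + t * y"]
  proof (rule cSUP_least)
    fix n
    have "L n - (2 * real n + 1) * ((1 - t) * x + t * y)
        = (1 - t) * (L n - (2 * real n + 1) * x) + t * (L n - (2 * real n + 1) * y)"
      by (simp add: algebra_simps)
    also have "\<dots> \<le> (1 - t) * H x + t * H y"
      using xy t by (intro add_mono mult_left_mono H_ge) auto
    finally show "L n - (2 * real n + 1) * ((1 - t) * x + t * y) \<le> (1 - t) * H x + t * H y" .
  qed simp
  then show "H ((1 - t) *\<^sub>R x + t *\<^sub>R y) \<le> (1 - t) * H x + t * H y"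
    by simp
qed (simp add: convex_real_interval)

lemma continuous_on_H: "continuous_on {0<..} H"
  by (rule convex_on_continuous[OF open_greaterThan convex_on_H])

text \<open>Take \<open>n \<approx> d\<^sup>2/(16 s\<^sup>2)\<close> in the supremum and use \<open>L n \<ge> d \<surd>n\<close>.\<close>
lemma H_lower_bound:
  assumes s: "0 < s" "s \<le> d / 7"
  shows "d\<^sup>2 / (16 * s) \<le> H s"
proof -
  define n where "n = nat \<lceil>d\<^sup>2 / (16 * s\<^sup>2)\<rceil>"
  have n: "d\<^sup>2 / (16 * s\<^sup>2) \<le> real n" "real n \<le> d\<^sup>2 / (16 * s\<^sup>2) + 1"
    unfolding n_def using s by (linarith, simp add: of_nat_nat)
  have "sqrt (d\<^sup>2 / (16 * s\<^sup>2)) = d / (4 * s)"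
    using s d_pos by (intro real_sqrt_unique) (auto simp: power_divide power_mult_distrib)
  then have "d / (4 * s) \<le> sqrt (real n)"
    using n(1) real_sqrt_le_mono by metis
  then have "d * (d / (4 * s)) \<le> L n"
    using d_pos sqrt_le_L[of n] by (smt (verit) mult_left_mono)
  moreover have "d * (d / (4 * s)) = 4 * (d\<^sup>2 / (16 * s))"
    by (simp add: power2_eq_square)
  moreover have "(2 * real n + 1) * s \<le> (2 * (d\<^sup>2 / (16 * s\<^sup>2) + 1) + 1) * s"
    using n(2) s by (intro mult_right_mono) auto
  moreover have "(2 * (d\<^sup>2 / (16 * s\<^sup>2) + 1) + 1) * s = 2 * (d\<^sup>2 / (16 * s)) + 3 * s"
    using s by (simp add: field_simps power2_eq_square)
  moreover have "3 * s \<le> d\<^sup>2 / (16 * s)"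
  proof -
    have "(7 * s)\<^sup>2 \<le> d\<^sup>2"
      using s by (intro power_mono) auto
    moreover have "3 * s * (16 * s) \<le> (7 * s)\<^sup>2"
      by (simp add: power2_eq_square)
    ultimately have "3 * s * (16 * s) \<le> d\<^sup>2"
      by linarith
    then show ?thesis
      using s by (simp add: pos_le_divide_eq)
  qed
  ultimately have "d\<^sup>2 / (16 * s) \<le> L n - (2 * real n + 1) * s"
    by linarith
  also have "\<dots> \<le> H s"
    by (rule H_ge[OF s(1)])
  finally show ?thesis .
qed

definition G :: "real \<Rightarrow> real" where
  "G x = (if x \<le> 0 then 0 else exp (- H x))"

lemma G_0: "G 0 = 0"
  by (simp add: G_def)

lemma G_nonneg: "0 \<le> G x"
  by (simp add: G_def)

lemma ln_inverse_G: "0 < x \<Longrightarrow> ln (1 / G x) = H x"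
  by (simp add: G_def ln_div)

lemma G_le_exp_L: "0 < s \<Longrightarrow> G s \<le> exp (- L n + (2 * real n + 1) * s)"
  using H_ge[of s n] by (simp add: G_def)

lemma G_le_exp: "0 < s \<Longrightarrow> s \<le> d / 7 \<Longrightarrow> G s \<le> exp (- (d\<^sup>2 / (16 * s)))"
  using H_lower_bound[of s] by (simp add: G_def)

lemma mono_on_G: "mono_on {0..1} G"
proof (rule mono_onI)
  fix x y :: real assume "x \<in> {0..1}" "y \<in> {0..1}" "x \<le> y"
  then show "G x \<le> G y"
    using H_antimono[of x y] by (cases "x = 0") (auto simp: G_def)
qed

lemma continuous_on_G: "continuous_on {0..1} G"
  unfolding continuous_on_eq_continuous_within
proof
  fix x :: real assume x: "x \<in> {0..1}"
  show "continuous (at x within {0..1}) G"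
  proof (cases "x = 0")
    case True
    have "(G \<longlongrightarrow> 0) (at_right 0)"
    proof (rule tendsto_sandwich[OF _ _ tendsto_const])
      show "\<forall>\<^sub>F s in at_right 0. 0 \<le> G s"
        by (simp add: G_nonneg)
      show "\<forall>\<^sub>F s in at_right 0. G s \<le> exp (- (d\<^sup>2 / (16 * s)))"
        using d_pos by (intro eventually_at_rightI[of 0 "d / 7"] G_le_exp) auto
      show "((\<lambda>s. exp (- (d\<^sup>2 / (16 * s)))) \<longlongrightarrow> 0) (at_right 0)"
        using d_pos by real_asymp
    qed
    then show ?thesis
      using True by (simp add: continuous_within at_within_Icc_at_right G_0)
  next
    case False
    with x have "0 < x" by simp
    have "\<forall>\<^sub>F y in nhds x. y \<in> {0<..}"
      using \<open>0 < x\<close> by (intro eventually_nhds_in_open) auto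
    then have "\<forall>\<^sub>F y in nhds x. G y = exp (- H y)"
      by eventually_elim (simp add: G_def)
    moreover have "isCont (\<lambda>y. exp (- H y)) x"
      using continuous_on_H \<open>0 < x\<close> by (intro continuous_intros) (simp add: continuous_on_eq_continuous_at)
    ultimately have "isCont G x"
      by (simp add: isCont_cong)
    then show ?thesis
      by (rule continuous_at_imp_continuous_within)
  qed
qed

lemma liminf_cond_G: "liminf_cond G"
proof -
  have "\<forall>\<^sub>F x in at_right 0. ereal (d\<^sup>2 / 16) \<le> ereal (x * ln (1 / G x))"
    unfolding eventually_at_right_field
  proof (intro exI[of _ "d / 7"] conjI allI impI)
    fix x :: real assume x: "0 < x" "x < d / 7"
    then have "x * (d\<^sup>2 / (16 * x)) \<le> x * H x"
      using H_lower_bound[of x] by (intro mult_left_mono) auto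
    then show "ereal (d\<^sup>2 / 16) \<le> ereal (x * ln (1 / G x))"
      using x by (simp add: ln_inverse_G)
  qed (use d_pos in simp)
  then have "ereal (d\<^sup>2 / 16) \<le> Liminf (at_right 0) (\<lambda>x. ereal (x * ln (1 / G x)))"
    by (rule Liminf_bounded)
  moreover have "0 < ereal (d\<^sup>2 / 16)"
    using d_pos by simp
  ultimately show ?thesis
    unfolding liminf_cond_def by (rule less_le_trans[rotated])
qed

lemma H_ge_1:
  assumes "0 < x" "x \<le> d / 7" "x \<le> d\<^sup>2 / 16"
  shows "1 \<le> H x"
proof -
  have "1 \<le> d\<^sup>2 / (16 * x)"
    using assms by (simp add: pos_le_divide_eq mult.commute)
  with H_lower_bound[OF assms(1,2)] show ?thesis
    by linarith
qed

lemma H_dyadic_le: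
  assumes "0 < a" "a \<le> 1 / 2" "dyadic_ratio j \<le> 2 * a / 2 ^ k"
  shows "H (a / 2 ^ k) \<le> 2 ^ j"
proof -
  have "H (a / 2 ^ k) \<le> L (2 ^ j)"
    using assms by (intro H_le) auto
  also have "\<dots> = 2 ^ j * dyadic_ratio j"
    by (simp add: dyadic_ratio_def)
  also have "\<dots> \<le> 2 ^ j * 1"
  proof -
    have "2 * a / 2 ^ k \<le> 2 * a"
      using assms by (simp add: divide_le_eq)
    then show ?thesis
      using assms by (intro mult_left_mono) auto
  qed
  finally show ?thesis by simp
qed

lemma set_integrable_ln_H:
  assumes a: "0 < a" "a \<le> d / 7" "a \<le> d\<^sup>2 / 16" "a \<le> 1 / 2"
  shows "set_integrable lborel {0<..a} (\<lambda>x. ln (H x))"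
proof -
  have ge_1: "1 \<le> H x" if "x \<in> {0<..a}" for x
    using that a by (intro H_ge_1) auto
  have "antimono_on {0<..a} (\<lambda>x. ln (H x))"
  proof (rule monotone_onI)
    fix x y assume "x \<in> {0<..a}" "y \<in> {0<..a}" "x \<le> y"
    then have "H y \<le> H x" "1 \<le> H y"
      using H_antimono ge_1 by auto
    then show "ln (H y) \<le> ln (H x)"
      by simp
  qed
  moreover have "set_borel_measurable lborel {0<..a} (\<lambda>x. ln (H x))"
  proof -
    have "continuous_on {0<..a} (\<lambda>x. ln (H x))"
      using ge_1 by (intro continuous_on_ln continuous_on_subset[OF continuous_on_H]) force+
    then show ?thesis
      unfolding set_borel_measurable_def measurable_lborel2
      by (intro borel_measurable_continuous_on_indicator) auto
  qed
  moreover have "summable (\<lambda>k. ln (H (a / 2 ^ k)) / 2 ^ k)"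
  proof -
    obtain \<iota> where \<iota>: "\<And>k. dyadic_ratio (\<iota> k) \<le> 2 * a / 2 ^ k" "summable (\<lambda>k. real (\<iota> k) / 2 ^ k)"
      using dyadic_first_index[OF dyadic_ratio_nonneg summable_dyadic_ratio, of "2 * a"] a(1) by auto
    have H_pos: "1 \<le> H (a / 2 ^ k)" for k
      using a(1) by (intro ge_1) (simp add: divide_le_eq)
    have "ln (H (a / 2 ^ k)) \<le> ln (2 ^ \<iota> k)" for k
      using H_dyadic_le[OF a(1,4) \<iota>(1)] H_pos[of k] by simp
    also have "ln (2 ^ \<iota> k) \<le> real (\<iota> k)" for k
      using ln_2_less_1 mult_left_mono[of "ln 2" 1 "real (\<iota> k)"] by (simp add: ln_realpow)
    finally have "ln (H (a / 2 ^ k)) \<le> real (\<iota> k)" for k .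
    moreover have "0 \<le> ln (H (a / 2 ^ k))" for k
      using H_pos[of k] by simp
    ultimately show ?thesis
      by (intro summable_comparison_test'[OF \<iota>(2), where N = 0]) (simp add: divide_right_mono)
  qed
  ultimately show ?thesis
    using set_integrable_Ioc_iff_summable_dyadic[of a "\<lambda>x. ln (H x)"] a(1) ge_1 by simp
qed

lemma loglog_cond_G: "loglog_cond G"
proof -
  define a where "a = min (d / 7) (min (d\<^sup>2 / 16) (1 / 2))"
  have a: "0 < a" "a \<le> d / 7" "a \<le> d\<^sup>2 / 16" "a \<le> 1 / 2"
    using d_pos by (auto simp: a_def)
  have "set_integrable lborel {0<..a} (\<lambda>x. ln (ln (1 / G x)))"
    using set_integrable_ln_H[OF a]
    by (rule set_integrable_cong[THEN iffD1, rotated -1]) (auto simp: ln_inverse_G)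
  moreover have "G x < 1" if "x \<in> {0<..a}" for x
    using H_ge_1[of x] that a by (simp add: G_def)
  ultimately show ?thesis
    unfolding loglog_cond_def using a(1) by blast
qed

lemma P_G_le: "P_G G (real (2 * n + 1)) \<le> exp (- L n)"
proof (cases "(\<lambda>r. G (1 - r) * r powr real (2 * n + 1)) integrable_on {0..1}")
  case True
  have "G (1 - r) * r powr real (2 * n + 1) \<le> exp (- L n)" if r: "r \<in> {0..1}" for r
  proof (cases "r = 0 \<or> r = 1")
    case False
    with r have "0 < r" "0 < 1 - r" by auto
    have "r ^ (2 * n + 1) \<le> exp (- ((2 * real n + 1) * (1 - r)))"
      using power_le_exp_minus[of r "2 * n + 1"] \<open>0 < r\<close>
      unfolding of_nat_add of_nat_mult of_nat_1 of_nat_numeral by simp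
    then have "G (1 - r) * r powr real (2 * n + 1)
        \<le> exp (- L n + (2 * real n + 1) * (1 - r)) * exp (- ((2 * real n + 1) * (1 - r)))"
      using G_le_exp_L[OF \<open>0 < 1 - r\<close>, of n] G_nonneg \<open>0 < r\<close>
      unfolding powr_realpow[OF \<open>0 < r\<close>] by (intro mult_mono) auto
    then show ?thesis
      by (simp flip: exp_add)
  qed (auto simp: G_0)
  then have "P_G G (real (2 * n + 1)) \<le> integral {0..1} (\<lambda>_::real. exp (- L n))"
    unfolding P_G_def by (intro integral_le True) auto
  then show ?thesis by simp
qed (simp add: P_G_def not_integrable_integral)

end

lemma one_plus_square_shift_le:
  fixes a b :: real
  assumes "0 \<le> b"
  shows "1 + (a + b)\<^sup>2 \<le> (1 + b)\<^sup>2 * (1 + a\<^sup>2)"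
proof -
  have "0 \<le> 2 * b * ((a - 1/2)\<^sup>2 + 3/4) + (a * b)\<^sup>2"
    using assms by simp
  then show ?thesis
    by (simp add: power2_eq_square algebra_simps)
qed

lemma summable_inverse_square_weight_shift:
  fixes f :: "nat \<Rightarrow> real"
  assumes nonneg: "\<And>n. K \<le> n \<Longrightarrow> 0 \<le> f n" and summable: "summable (\<lambda>n. f n / (1 + (real n)\<^sup>2))"
  shows "summable (\<lambda>n. f (n + K) / (1 + (real n)\<^sup>2))"
proof -
  have "summable (\<lambda>n. (1 + real K)\<^sup>2 * (f (n + K) / (1 + (real (n + K))\<^sup>2)))"
    using summable by (intro summable_mult) (subst summable_iff_shift)
  then show ?thesis
  proof (rule summable_comparison_test'[where N = 0])
    fix n
    have "0 \<le> f (n + K)" by (rule nonneg) simp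
    have "1 + (real n + real K)\<^sup>2 \<le> (1 + real K)\<^sup>2 * (1 + (real n)\<^sup>2)"
      by (rule one_plus_square_shift_le) simp
    have "f (n + K) / (1 + (real n)\<^sup>2) = (1 + real K)\<^sup>2 * f (n + K) / ((1 + real K)\<^sup>2 * (1 + (real n)\<^sup>2))"
      by simp
    also have "\<dots> \<le> (1 + real K)\<^sup>2 * f (n + K) / (1 + (real n + real K)\<^sup>2)"
      using \<open>0 \<le> f (n + K)\<close> by (intro frac_le \<open>1 + (real n + real K)\<^sup>2 \<le> _\<close>) (auto intro: add_pos_nonneg)
    finally have "f (n + K) / (1 + (real n)\<^sup>2) \<le> (1 + real K)\<^sup>2 * f (n + K) / (1 + (real n + real K)\<^sup>2)" .
    with \<open>0 \<le> f (n + K)\<close> show "norm (f (n + K) / (1 + (real n)\<^sup>2)) \<le> (1 + real K)\<^sup>2 * (f (n + K) / (1 + (real (n + K))\<^sup>2))"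
      by simp
  qed
qed

text \<open>The conditions of admissibility hold only eventually, so \<open>M\<close> is shifted by \<open>K\<close> first.\<close>
lemma admissible_imp_concave_growth:
  fixes M :: "nat \<Rightarrow> real"
  assumes "admissible M"
  obtains K d where "concave_growth (\<lambda>n. ln (1 / M (n + K))) d"
proof -
  have pos: "\<And>n. 0 < M n" and dec: "decseq M"
    and convex: "\<forall>\<^sub>F n in sequentially. 2 * ln (M n) \<le> ln (M (n + 1)) + ln (M (n - 1))"
    and summable: "summable (\<lambda>n. ln (1 / M n) / (1 + (real n)\<^sup>2))"
    using assms unfolding admissible_def by auto
  obtain d where "0 < d" and decay: "\<forall>\<^sub>F n in sequentially. M n \<le> exp (- d * sqrt n)"
    using assms unfolding admissible_def by auto
  obtain N where N: "\<And>n. N \<le> n \<Longrightarrow> 2 * ln (M n) \<le> ln (M (n + 1)) + ln (M (n - 1)) \<and> M n \<le> exp (- d * sqrt n)"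
    using eventually_conj[OF convex decay] unfolding eventually_sequentially by blast
  define K where "K = Suc N"
  define L where "L n = ln (1 / M (n + K))" for n
  have L_eq: "L n = - ln (M (n + K))" for n
    using pos[of "n + K"] by (simp add: L_def ln_div)
  have "concave_growth L d"
  proof
    show "L n \<le> L (Suc n)" for n
      using decseqD[OF dec, of "n + K" "Suc n + K"] pos[of "n + K"] pos[of "Suc n + K"]
      by (simp add: L_eq)
    show "L (Suc (Suc n)) - L (Suc n) \<le> L (Suc n) - L n" for n
      using N[of "Suc n + K"] by (simp add: K_def L_eq)
    show "d * sqrt n \<le> L n" for n
    proof -
      have "M (n + K) \<le> exp (- d * sqrt (n + K))"
        using N[of "n + K"] by (simp add: K_def)
      then have "d * sqrt (n + K) \<le> L n"
        using pos[of "n + K"] by (simp add: L_def ln_div ln_le_cancel_iff[symmetric])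
      moreover have "d * sqrt n \<le> d * sqrt (n + K)"
        using \<open>0 < d\<close> by (intro mult_left_mono) auto
      ultimately show ?thesis by linarith
    qed
    show "summable (\<lambda>n. L n / (1 + (real n)\<^sup>2))"
      unfolding L_def
    proof (rule summable_inverse_square_weight_shift[OF _ summable])
      fix n assume "K \<le> n"
      then have "M n \<le> exp (- d * sqrt n)"
        using N by (simp add: K_def)
      also have "\<dots> \<le> 1"
        using \<open>0 < d\<close> by simp
      finally show "0 \<le> ln (1 / M n)"
        using pos[of n] by simp
    qed
  qed (rule \<open>0 < d\<close>)
  then show ?thesis
    unfolding L_def by (rule that)
qed

theorem admissible_imp_weight:
  fixes M :: "nat \<Rightarrow> real"
  assumes "admissible M"
  shows "\<exists>G. continuous_on {0..1} G \<and> mono_on {0..1} G \<and> G 0 = 0 \<and> liminf_cond G \<and> loglog_cond G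
    \<and> (\<forall>\<^sub>F n in sequentially. P_G G (real (2 * n + 1)) \<le> M n)"
proof -
  obtain K d where "concave_growth (\<lambda>n. ln (1 / M (n + K))) d"
    using admissible_imp_concave_growth[OF assms] by blast
  then interpret concave_growth "\<lambda>n. ln (1 / M (n + K))" d .
  have "P_G G (real (2 * n + 1)) \<le> M n" for n
  proof -
    have "0 < M (n + K)" "decseq M"
      using assms unfolding admissible_def by auto
    then have "exp (- ln (1 / M (n + K))) \<le> M n"
      by (simp add: ln_div decseqD)
    with P_G_le[of n] show ?thesis
      by simp
  qed
  then show ?thesis
    using continuous_on_G mono_on_G G_0 liminf_cond_G loglog_cond_G by (intro exI[of _ G]) auto
qed

theorem mainTheorem13:
  shows "(\<forall>G :: real \<Rightarrow> real.
            continuous_on {0..1} G \<and> mono_on {0..1} G \<and>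
            (\<forall>x\<in>{0..1}. G x \<ge> 0) \<and> (\<forall>x\<in>{0<..1}. G x > 0) \<and>
            liminf_cond G \<and> loglog_cond G
          \<longrightarrow> admissible (\<lambda>n. 2 * integral {0..1} (\<lambda>r. G (1 - r) * r ^ (2 * n + 1))))
       \<and>
         (\<forall>M :: nat \<Rightarrow> real. admissible M \<longrightarrow>
            (\<exists>G :: real \<Rightarrow> real.
               continuous_on {0..1} G \<and> mono_on {0..1} G \<and> G 0 = 0 \<and>
               liminf_cond G \<and> loglog_cond G \<and>
               (\<forall>\<^sub>F n in sequentially. P_G G (real (2 * n + 1)) \<le> M n)))"
  using admissible_moment_sequence admissible_imp_weight by blast

end
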